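(* Let $N\ge 4$ be an integer. Suppose $w\in C^2([0,\infty))$ satisfies $$-w''(t)+(N-2)w'(t)+(N-1)w(t)=\frac{N-1}{2}\,e^{-t}\,w(t)^2\qquad\text{for all }t\ge 0,$$ together with $w(0)=0$ and $\lim_{t\to+\infty}w(t)=0$. Then $w\equiv 0$.
   Context: This is the radial Dirichlet problem (after the substitutions $v=u'$, $w(t)=-v(e^{-t})$) for $\Delta^2u=S_2[u]$ in the unit ball of $\mathbb{R}^N$, where $S_2[u]$ is the sum of the $2\times2$ principal minors of the Hessian matrix of $u$; this is the case $k=2$, $\lambda=0$. *)

theory Defs
  imports "HOL-Analysis.Analysis"
begin

end

theory Submission
  imports Defs
begin

text \<open>
  With \<open>s = w + w'\<close> the equation reads \<open>s' = (N - 1) s - c e^(-t) w^2\<close>, \<open>c = (N - 1)/2 \<ge> 0\<close>,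
  so \<open>e^(-(N-1)t) s\<close> is nonincreasing. As \<open>w \<rightarrow> 0\<close>, \<open>s\<close> can neither stay below a negative
  constant nor above a positive one; this traps \<open>e^(-(N-1)t) s\<close> between \<open>0\<close> and \<open>K e^(-Nt)\<close>,
  so \<open>0 \<le> s \<le> K e^(-t)\<close> and, because \<open>(e^t w)' = e^t s\<close> and \<open>w(0) = 0\<close>, also \<open>w \<ge> 0\<close>.
  A suitable energy \<open>F\<close> is then nondecreasing, equals \<open>w'(0)^2/2\<close> at \<open>0\<close> and is \<open>O(e^(-t))\<close>,
  which forces \<open>w'(0) = 0\<close>. Thus \<open>e^(-(N-1)t) s\<close> vanishes at \<open>0\<close>, hence everywhere, and \<open>w = 0\<close>.
\<close>

lemma nonneg_derivative_imp_mono_atLeast: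
  fixes f f' :: "real \<Rightarrow> real"
  assumes deriv: "\<And>t. t \<ge> a \<Longrightarrow> (f has_real_derivative f' t) (at t within {a..})"
    and nonneg: "\<And>t. t \<ge> a \<Longrightarrow> f' t \<ge> 0"
    and "a \<le> s" "s \<le> t"
  shows "f s \<le> f t"
proof -
  have "continuous_on {a..} f"
    by (rule DERIV_continuous_on) (use deriv in auto)
  then have "continuous_on {s..t} f"
    by (rule continuous_on_subset) (use \<open>a \<le> s\<close> in auto)
  then show ?thesis
  proof (rule DERIV_nonneg_imp_increasing_open[OF \<open>s \<le> t\<close>, rotated])
    fix x assume x: "s < x" "x < t"
    then have "at x within {a..} = at x"
      using \<open>a \<le> s\<close> by (intro at_within_interior) simp
    then show "\<exists>y. DERIV f x :> y \<and> y \<ge> 0"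
      using deriv[of x] nonneg[of x] x \<open>a \<le> s\<close> by auto
  qed
qed

lemma bounded_image_atLeast_if_tendsto:
  fixes f :: "real \<Rightarrow> 'a::metric_space"
  assumes cont: "continuous_on {a..} f" and lim: "(f \<longlongrightarrow> l) at_top"
  shows "bounded (f ` {a..})"
proof -
  obtain T where T: "\<And>t. t \<ge> T \<Longrightarrow> dist (f t) l < 1"
    using tendstoD[OF lim, of 1] by (auto simp: eventually_at_top_linorder)
  have "bounded (f ` {a..max a T})"
    using cont by (intro compact_imp_bounded compact_continuous_image)
      (auto intro: continuous_on_subset)
  moreover have "f ` {max a T..} \<subseteq> ball l 1"
    using T by (auto simp: dist_commute)
  then have "bounded (f ` {max a T..})"
    using bounded_ball bounded_subset by blast
  moreover have "{a..} = {a..max a T} \<union> {max a T..}"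
    by auto
  ultimately show ?thesis
    by (metis bounded_Un image_Un)
qed

text \<open>Beyond the point where \<open>\<bar>w\<bar> < \<delta>/2\<close> we get \<open>w' \<le> -\<delta>/2\<close>, so \<open>w\<close> would decrease linearly.\<close>

lemma tendsto_zero_contradicts_sum_with_deriv_le_neg:
  fixes w w' :: "real \<Rightarrow> real"
  assumes deriv: "\<And>t. t \<ge> a \<Longrightarrow> (w has_real_derivative w' t) (at t within {a..})"
    and lim: "(w \<longlongrightarrow> 0) at_top" and "\<delta> > 0" and "t\<^sub>0 \<ge> a"
    and le: "\<And>t. t \<ge> t\<^sub>0 \<Longrightarrow> w t + w' t \<le> - \<delta>"
  shows False
proof -
  obtain T where T: "\<And>t. t \<ge> T \<Longrightarrow> \<bar>w t\<bar> < \<delta>/2"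
    using tendstoD[OF lim, of "\<delta>/2"] \<open>\<delta> > 0\<close> by (auto simp: eventually_at_top_linorder)
  define T\<^sub>1 where "T\<^sub>1 = max T t\<^sub>0"
  have "- w T\<^sub>1 - \<delta>/2 * T\<^sub>1 \<le> - w (T\<^sub>1 + 4) - \<delta>/2 * (T\<^sub>1 + 4)"
  proof (rule nonneg_derivative_imp_mono_atLeast[where a = T\<^sub>1 and f = "\<lambda>t. - w t - \<delta>/2 * t"
        and f' = "\<lambda>t. - w' t - \<delta>/2"])
    fix t assume t: "t \<ge> T\<^sub>1"
    have "(w has_real_derivative w' t) (at t within {T\<^sub>1..})"
      using deriv[of t] t \<open>t\<^sub>0 \<ge> a\<close>
      by (auto simp: T\<^sub>1_def intro: has_field_derivative_subset)
    then show "((\<lambda>t. - w t - \<delta>/2 * t) has_real_derivative - w' t - \<delta>/2) (at t within {T\<^sub>1..})"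
      by (auto intro!: derivative_eq_intros)
    show "0 \<le> - w' t - \<delta>/2"
      using le[of t] T[of t] t by (auto simp: T\<^sub>1_def)
  qed simp_all
  then have "w (T\<^sub>1 + 4) \<le> w T\<^sub>1 - 2 * \<delta>"
    by (simp add: algebra_simps)
  moreover have "\<bar>w T\<^sub>1\<bar> < \<delta>/2" "\<bar>w (T\<^sub>1 + 4)\<bar> < \<delta>/2"
    using T by (simp_all add: T\<^sub>1_def)
  ultimately show False
    by linarith
qed

text \<open>\<open>n\<close> and \<open>c\<close> stand for \<open>N\<close> and \<open>(N - 1)/2\<close>; only \<open>c \<ge> 0\<close> is used.\<close>

locale decaying_solution =
  fixes n c :: real and w w' w'' :: "real \<Rightarrow> real"
  assumes n_ge_4: "n \<ge> 4" and c_nonneg: "c \<ge> 0"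
    and w_deriv: "\<And>t. t \<ge> 0 \<Longrightarrow> (w has_real_derivative w' t) (at t within {0..})"
    and w'_deriv: "\<And>t. t \<ge> 0 \<Longrightarrow> (w' has_real_derivative w'' t) (at t within {0..})"
    and ode: "\<And>t. t \<ge> 0 \<Longrightarrow> w'' t = (n - 2) * w' t + (n - 1) * w t - c * exp (- t) * (w t)\<^sup>2"
    and w_0: "w 0 = 0"
    and w_tendsto: "(w \<longlongrightarrow> 0) at_top"
begin

lemma w_plus_w'_deriv:
  assumes "t \<ge> 0"
  shows "((\<lambda>t. w t + w' t) has_real_derivative
           (n - 1) * (w t + w' t) - c * exp (- t) * (w t)\<^sup>2) (at t within {0..})"
  using DERIV_add[OF w_deriv w'_deriv, OF assms assms] by (simp add: ode[OF assms] algebra_simps)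

definition damped_sum :: "real \<Rightarrow> real"
  where "damped_sum t = exp (- (n - 1) * t) * (w t + w' t)"

lemma w_plus_w'_eq_damped_sum: "w t + w' t = exp ((n - 1) * t) * damped_sum t"
proof -
  have "exp ((n - 1) * t) * exp (- (n - 1) * t) = 1"
    by (metis exp_minus_inverse minus_mult_left)
  then show ?thesis
    by (simp add: damped_sum_def mult.assoc[symmetric])
qed

lemma damped_sum_deriv:
  assumes "t \<ge> 0"
  shows "(damped_sum has_real_derivative - c * exp (- n * t) * (w t)\<^sup>2) (at t within {0..})"
proof -
  have exp_deriv: "((\<lambda>t. exp (- (n - 1) * t)) has_real_derivative - (n - 1) * exp (- (n - 1) * t))
          (at t within {0..})"
    by (auto intro!: derivative_eq_intros)
  have exp_split: "exp (- n * t) = exp (- (n - 1) * t) * exp (- t)"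
    by (subst exp_add[symmetric]) (simp add: algebra_simps)
  have "- (n - 1) * exp (- (n - 1) * t) * (w t + w' t)
          + ((n - 1) * (w t + w' t) - c * exp (- t) * (w t)\<^sup>2) * exp (- (n - 1) * t)
        = - c * exp (- n * t) * (w t)\<^sup>2"
    unfolding exp_split by (simp add: algebra_simps)
  with DERIV_mult[OF exp_deriv w_plus_w'_deriv[OF assms]] show ?thesis
    unfolding damped_sum_def[abs_def] by (rule DERIV_cong)
qed

lemma damped_sum_antimono:
  assumes "0 \<le> s" "s \<le> t"
  shows "damped_sum t \<le> damped_sum s"
proof -
  have "- damped_sum s \<le> - damped_sum t"
    by (rule nonneg_derivative_imp_mono_atLeast[OF DERIV_minus[OF damped_sum_deriv]])
      (use c_nonneg assms in auto)
  then show ?thesis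
    by simp
qed

lemma damped_sum_nonneg:
  assumes "t \<ge> 0"
  shows "damped_sum t \<ge> 0"
proof (rule ccontr)
  assume neg: "\<not> damped_sum t \<ge> 0"
  show False
  proof (rule tendsto_zero_contradicts_sum_with_deriv_le_neg[OF w_deriv w_tendsto _ assms])
    fix s assume "s \<ge> t"
    have "w s + w' s \<le> exp ((n - 1) * s) * damped_sum t"
      unfolding w_plus_w'_eq_damped_sum using damped_sum_antimono[OF assms \<open>s \<ge> t\<close>] by simp
    also have "\<dots> \<le> damped_sum t"
      using mult_right_mono_neg[of 1 "exp ((n - 1) * s)" "damped_sum t"] neg assms \<open>s \<ge> t\<close> n_ge_4
      by simp
    finally show "w s + w' s \<le> - (- damped_sum t)"
      by simp
  qed (use neg in simp_all)
qed

lemma damped_sum_excess_mono: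
  assumes bound: "\<And>t. t \<ge> 0 \<Longrightarrow> \<bar>w t\<bar> \<le> M" and "0 \<le> s" "s \<le> t"
  shows "damped_sum s - c * M\<^sup>2 / n * exp (- n * s) \<le> damped_sum t - c * M\<^sup>2 / n * exp (- n * t)"
proof (rule nonneg_derivative_imp_mono_atLeast[where a = 0
      and f = "\<lambda>r. damped_sum r - c * M\<^sup>2 / n * exp (- n * r)"
      and f' = "\<lambda>r. c * exp (- n * r) * (M\<^sup>2 - (w r)\<^sup>2)"])
  fix r :: real assume "r \<ge> 0"
  have "((\<lambda>r. c * M\<^sup>2 / n * exp (- n * r)) has_real_derivative - c * M\<^sup>2 * exp (- n * r))
          (at r within {0..})"
    using n_ge_4 by (auto intro!: derivative_eq_intros)
  from DERIV_diff[OF damped_sum_deriv[OF \<open>r \<ge> 0\<close>] this]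
  show "((\<lambda>r. damped_sum r - c * M\<^sup>2 / n * exp (- n * r)) has_real_derivative
          c * exp (- n * r) * (M\<^sup>2 - (w r)\<^sup>2)) (at r within {0..})"
    by (rule DERIV_cong) (simp add: algebra_simps)
  have "(w r)\<^sup>2 \<le> M\<^sup>2"
    using power_mono[OF bound[OF \<open>r \<ge> 0\<close>] abs_ge_zero, of 2] by simp
  then show "0 \<le> c * exp (- n * r) * (M\<^sup>2 - (w r)\<^sup>2)"
    using c_nonneg by simp
qed (use assms in simp_all)

lemma damped_sum_le:
  assumes bound: "\<And>t. t \<ge> 0 \<Longrightarrow> \<bar>w t\<bar> \<le> M" and "t \<ge> 0"
  shows "damped_sum t \<le> c * M\<^sup>2 / n * exp (- n * t)"
proof (rule ccontr)
  define \<delta> where "\<delta> = damped_sum t - c * M\<^sup>2 / n * exp (- n * t)"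
  assume "\<not> damped_sum t \<le> c * M\<^sup>2 / n * exp (- n * t)"
  then have "\<delta> > 0"
    by (simp add: \<delta>_def)
  have minus_deriv: "((\<lambda>s. - w s) has_real_derivative - w' s) (at s within {0..})" if "s \<ge> 0" for s
    using DERIV_minus[OF w_deriv[OF that]] .
  have minus_tendsto: "((\<lambda>s. - w s) \<longlongrightarrow> 0) at_top"
    using tendsto_minus[OF w_tendsto] by simp
  have minus_le: "- w s + - w' s \<le> - \<delta>" if "s \<ge> t" for s
  proof -
    have "c * M\<^sup>2 / n * exp (- n * s) \<ge> 0"
      using c_nonneg n_ge_4 by simp
    then have "\<delta> \<le> damped_sum s"
      using damped_sum_excess_mono[OF bound \<open>t \<ge> 0\<close> that] by (simp add: \<delta>_def)
    also have "\<dots> \<le> exp ((n - 1) * s) * damped_sum s"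
      using mult_right_mono[of 1 "exp ((n - 1) * s)" "damped_sum s"]
        \<open>\<delta> > 0\<close> \<open>\<delta> \<le> damped_sum s\<close> that \<open>t \<ge> 0\<close> n_ge_4
      by simp
    finally show ?thesis
      by (simp add: w_plus_w'_eq_damped_sum[symmetric])
  qed
  show False
    by (rule tendsto_zero_contradicts_sum_with_deriv_le_neg[where a = 0 and t\<^sub>0 = t and \<delta> = \<delta>
          and w = "\<lambda>s. - w s" and w' = "\<lambda>s. - w' s"])
      (use minus_deriv minus_tendsto \<open>\<delta> > 0\<close> \<open>t \<ge> 0\<close> minus_le in simp_all)
qed

lemma w_bounded: obtains M where "\<And>t. t \<ge> 0 \<Longrightarrow> \<bar>w t\<bar> \<le> M"
proof -
  have "continuous_on {0..} w"
    by (rule DERIV_continuous_on) (use w_deriv in auto)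
  then have "bounded (w ` {0..})"
    using w_tendsto by (rule bounded_image_atLeast_if_tendsto)
  then show ?thesis
    using that unfolding bounded_real by auto
qed

lemma w_plus_w'_nonneg: "t \<ge> 0 \<Longrightarrow> w t + w' t \<ge> 0"
  unfolding w_plus_w'_eq_damped_sum using damped_sum_nonneg by simp

lemma w_plus_w'_le:
  assumes "\<And>t. t \<ge> 0 \<Longrightarrow> \<bar>w t\<bar> \<le> M" and "t \<ge> 0"
  shows "w t + w' t \<le> c * M\<^sup>2 / n * exp (- t)"
proof -
  have "w t + w' t \<le> exp ((n - 1) * t) * (c * M\<^sup>2 / n * exp (- n * t))"
    unfolding w_plus_w'_eq_damped_sum using damped_sum_le[OF assms] by (intro mult_left_mono) auto
  also have "\<dots> = c * M\<^sup>2 / n * exp (- t)"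
  proof -
    have "exp ((n - 1) * t) * exp (- n * t) = exp (- t)"
      by (subst exp_add[symmetric]) (simp add: algebra_simps)
    then show ?thesis
      by (metis mult.left_commute)
  qed
  finally show ?thesis .
qed

lemma exp_times_w_deriv:
  assumes "t \<ge> 0"
  shows "((\<lambda>t. exp t * w t) has_real_derivative exp t * (w t + w' t)) (at t within {0..})"
  using DERIV_mult[OF DERIV_exp[THEN has_field_derivative_at_within] w_deriv[OF assms]]
  by (simp add: algebra_simps)

lemma w_nonneg:
  assumes "t \<ge> 0"
  shows "w t \<ge> 0"
proof -
  have "exp 0 * w 0 \<le> exp t * w t"
    by (rule nonneg_derivative_imp_mono_atLeast[OF exp_times_w_deriv]) (use w_plus_w'_nonneg assms in auto)
  then show ?thesis
    by (simp add: w_0 zero_le_mult_iff)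
qed

definition energy :: "real \<Rightarrow> real"
  where "energy t = exp (- (n - 2) * t) *
           ((w t + w' t)\<^sup>2 / 2 - n / 2 * (w t + w' t) * w t + c / 3 * exp (- t) * (w t)^3)"

text \<open>The sign of this derivative is the only place where \<open>n \<ge> 4\<close> is needed.\<close>

lemma energy_deriv:
  assumes "t \<ge> 0"
  shows "(energy has_real_derivative exp (- (n - 2) * t) * (c * (n - 4) / 6 * exp (- t) * (w t)^3))
           (at t within {0..})"
proof -
  define s where "s t = w t + w' t" for t
  have s_deriv: "(s has_real_derivative (n - 1) * s t - c * exp (- t) * (w t)\<^sup>2) (at t within {0..})"
    using w_plus_w'_deriv[OF assms] by (simp add: s_def[abs_def])
  have w_deriv': "(w has_real_derivative s t - w t) (at t within {0..})"
    using w_deriv[OF assms] by (simp add: s_def)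
  have "energy = (\<lambda>t. exp (- (n - 2) * t) *
                   ((s t)\<^sup>2 / 2 - n / 2 * s t * w t + c / 3 * exp (- t) * (w t)^3))"
    by (simp add: energy_def[abs_def] s_def)
  then show ?thesis
    by (auto intro!: derivative_eq_intros s_deriv w_deriv'
        simp: field_simps power2_eq_square power3_eq_cube)
qed

lemma energy_0: "energy 0 = (w' 0)\<^sup>2 / 2"
  by (simp add: energy_def w_0)

lemma energy_ge_energy_0:
  assumes "t \<ge> 0"
  shows "energy 0 \<le> energy t"
  by (rule nonneg_derivative_imp_mono_atLeast[OF energy_deriv])
    (use c_nonneg n_ge_4 w_nonneg assms in auto)

lemma energy_le:
  assumes bound: "\<And>t. t \<ge> 0 \<Longrightarrow> \<bar>w t\<bar> \<le> M" and "t \<ge> 0"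
  shows "energy t \<le> ((c * M\<^sup>2 / n)\<^sup>2 / 2 + c / 3 * M^3) * exp (- t)"
proof -
  define K where "K = c * M\<^sup>2 / n"
  define s where "s = w t + w' t"
  define C where "C = K\<^sup>2 / 2 + c / 3 * M^3"
  have s: "0 \<le> s" "s \<le> K * exp (- t)"
    using w_plus_w'_nonneg w_plus_w'_le[OF bound] \<open>t \<ge> 0\<close> by (auto simp: s_def K_def)
  have w: "0 \<le> w t" "w t \<le> M"
    using w_nonneg bound \<open>t \<ge> 0\<close> by auto
  have exp_le_1: "exp (- (n - 2) * t) \<le> 1" "exp (- t) \<le> 1"
    using n_ge_4 \<open>t \<ge> 0\<close> by (auto simp: mult_nonpos_nonneg)
  have "s\<^sup>2 \<le> (K * exp (- t))\<^sup>2"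
    using s by (intro power_mono) auto
  also have "\<dots> = K\<^sup>2 * exp (- t) * exp (- t)"
    by (simp add: power2_eq_square)
  also have "\<dots> \<le> K\<^sup>2 * exp (- t)"
    using exp_le_1(2) by (intro mult_left_le) auto
  finally have "s\<^sup>2 / 2 \<le> K\<^sup>2 / 2 * exp (- t)"
    by simp
  moreover have "n / 2 * s * w t \<ge> 0"
    using n_ge_4 s w by simp
  moreover have "c / 3 * exp (- t) * (w t)^3 \<le> c / 3 * exp (- t) * M^3"
    using c_nonneg w by (intro mult_left_mono power_mono) auto
  ultimately have "s\<^sup>2 / 2 - n / 2 * s * w t + c / 3 * exp (- t) * (w t)^3 \<le> C * exp (- t)"
    by (simp add: C_def algebra_simps)
  then have "energy t \<le> exp (- (n - 2) * t) * (C * exp (- t))"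
    unfolding energy_def s_def[symmetric] by (intro mult_left_mono) auto
  also have "\<dots> \<le> C * exp (- t)"
    using exp_le_1(1) c_nonneg w by (intro mult_left_le_one_le) (auto simp: C_def)
  finally show ?thesis
    by (simp add: C_def K_def)
qed

lemma w'_0: "w' 0 = 0"
proof -
  obtain M where bound: "\<And>t. t \<ge> 0 \<Longrightarrow> \<bar>w t\<bar> \<le> M"
    using w_bounded by blast
  define C where "C = (c * M\<^sup>2 / n)\<^sup>2 / 2 + c / 3 * M^3"
  have "(w' 0)\<^sup>2 / 2 \<le> 0"
  proof (rule tendsto_le[OF trivial_limit_at_top_linorder])
    show "((\<lambda>t. C * exp (- t)) \<longlongrightarrow> 0) at_top"
      by (intro tendsto_mult_right_zero filterlim_compose[OF exp_at_bot filterlim_uminus_at_bot_at_top])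
    have "(w' 0)\<^sup>2 / 2 \<le> C * exp (- t)" if "t \<ge> 0" for t
      using energy_ge_energy_0[OF that] energy_le[OF bound that] unfolding energy_0 C_def by linarith
    then show "\<forall>\<^sub>F t in at_top. (w' 0)\<^sup>2 / 2 \<le> C * exp (- t)"
      unfolding eventually_at_top_linorder by blast
  qed simp
  then show ?thesis
    by simp
qed

lemma w_eq_0:
  assumes "t \<ge> 0"
  shows "w t = 0"
proof -
  have "damped_sum s = 0" if "s \<ge> 0" for s
    using damped_sum_antimono[OF order_refl that] damped_sum_nonneg[OF that]
    by (simp add: damped_sum_def w_0 w'_0)
  then have sum_zero: "w s + w' s = 0" if "s \<ge> 0" for s
    using that by (simp add: w_plus_w'_eq_damped_sum)
  have "- (exp 0 * w 0) \<le> - (exp t * w t)"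
    by (rule nonneg_derivative_imp_mono_atLeast[OF DERIV_minus[OF exp_times_w_deriv]])
      (use sum_zero assms in auto)
  then show ?thesis
    using w_nonneg[OF assms] by (simp add: w_0 mult_le_0_iff)
qed

end

theorem theorem3p3:
  fixes N :: nat and w w' w'' :: "real \<Rightarrow> real"
  assumes hN: "N \<ge> 4"
    and hw': "\<And>t. t \<ge> 0 \<Longrightarrow> (w has_real_derivative w' t) (at t within {0..})"
    and hw'': "\<And>t. t \<ge> 0 \<Longrightarrow> (w' has_real_derivative w'' t) (at t within {0..})"
    and hcont: "continuous_on {0..} w''"
    and hode: "\<And>t. t \<ge> 0 \<Longrightarrow>
        - w'' t + (real N - 2) * w' t + (real N - 1) * w t
          = (real N - 1) / 2 * exp (- t) * (w t)\<^sup>2"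
    and h0: "w 0 = 0"
    and hinf: "(w \<longlongrightarrow> 0) at_top"
  shows "\<forall>t\<ge>0. w t = 0"
proof -
  interpret decaying_solution "real N" "(real N - 1) / 2" w w' w''
  proof
    show "w'' t = (real N - 2) * w' t + (real N - 1) * w t - (real N - 1) / 2 * exp (- t) * (w t)\<^sup>2"
      if "t \<ge> 0" for t
      using hode[OF that] by linarith
  qed (use hN hw' hw'' h0 hinf in auto)
  show ?thesis
    using w_eq_0 by blast
qed

end
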